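(* Let $G$ be a graph with a type-2A 1-planar drawing $D$, and let $X$ and $Y$ be two distinct vertex subsets of $G$. Let $G'$ be the graph obtained from $G$ by removing every edge of $E_G(X,Y)$ that crosses (in $D$) some edge with both endvertices in $X$. If $D$ is nice, then $N_{G'}(X,Y)=N_G(X,Y)$.
   Context: All drawings are good (no edge crosses itself, two edges cross at most once, adjacent edges do not cross). A drawing is 1-planar if every edge is crossed at most once. If edges $ab$ and $cd$ cross in a 1-planar drawing of $G$, the associated edges of this crossing are the edges of $G[\{a,b,c,d\}]$ other than $ab$ and $cd$. A 1-planar drawing is type-2A if every crossing has at least two associated edges, and every crossing with exactly two associated edges has these two edges disjoint. A 1-planar drawing is nice if for every pair of crossing edges, all of their associated edges are uncrossed. For vertex sets $V_1,V_2$, $E_G(V_1,V_2)$ is the set of edges of $G$ with one endvertex in $V_1$ and the other in $V_2$, and $N_G(V_1,V_2)=\{v\in V_2: v \text{ is adjacent in } G \text{ to some vertex of } V_1\}$. *)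

theory Defs
  imports "HOL-Analysis.Analysis"
begin

definition simple_graph :: "'v set \<Rightarrow> 'v set set \<Rightarrow> bool" where
  "simple_graph V E \<longleftrightarrow> finite V \<and>
     (\<forall>e\<in>E. \<exists>a b. a \<noteq> b \<and> a \<in> V \<and> b \<in> V \<and> e = {a, b})"

definition drawing :: "'v set \<Rightarrow> 'v set set \<Rightarrow> ('v \<Rightarrow> complex) \<Rightarrow> ('v set \<Rightarrow> real \<Rightarrow> complex) \<Rightarrow> bool" where
  "drawing V E pos cv \<longleftrightarrow> inj_on pos V \<and>
     (\<forall>e\<in>E. arc (cv e) \<and> {pathstart (cv e), pathfinish (cv e)} = pos ` e \<and>
        (\<forall>v\<in>V. pos v \<in> path_image (cv e) \<longrightarrow> v \<in> e))"

definition edge_interior :: "('v \<Rightarrow> complex) \<Rightarrow> ('v set \<Rightarrow> real \<Rightarrow> complex) \<Rightarrow> 'v set \<Rightarrow> complex set" where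
  "edge_interior pos cv e = path_image (cv e) - pos ` e"

definition cross_points :: "('v \<Rightarrow> complex) \<Rightarrow> ('v set \<Rightarrow> real \<Rightarrow> complex) \<Rightarrow> 'v set \<Rightarrow> 'v set \<Rightarrow> complex set" where
  "cross_points pos cv e f = edge_interior pos cv e \<inter> edge_interior pos cv f"

definition crosses :: "('v \<Rightarrow> complex) \<Rightarrow> ('v set \<Rightarrow> real \<Rightarrow> complex) \<Rightarrow> 'v set \<Rightarrow> 'v set \<Rightarrow> bool" where
  "crosses pos cv e f \<longleftrightarrow> e \<noteq> f \<and> cross_points pos cv e f \<noteq> {}"

text \<open>Good drawing: no edge crosses itself (edges are arcs), two edges cross at most
  once, adjacent edges do not cross.\<close>
definition good_drawing :: "'v set \<Rightarrow> 'v set set \<Rightarrow> ('v \<Rightarrow> complex) \<Rightarrow> ('v set \<Rightarrow> real \<Rightarrow> complex) \<Rightarrow> bool" where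
  "good_drawing V E pos cv \<longleftrightarrow> drawing V E pos cv \<and>
     (\<forall>e\<in>E. \<forall>f\<in>E. e \<noteq> f \<longrightarrow>
        (\<forall>p q. p \<in> cross_points pos cv e f \<and> q \<in> cross_points pos cv e f \<longrightarrow> p = q) \<and>
        (e \<inter> f \<noteq> {} \<longrightarrow> \<not> crosses pos cv e f))"

definition one_planar :: "'v set \<Rightarrow> 'v set set \<Rightarrow> ('v \<Rightarrow> complex) \<Rightarrow> ('v set \<Rightarrow> real \<Rightarrow> complex) \<Rightarrow> bool" where
  "one_planar V E pos cv \<longleftrightarrow> good_drawing V E pos cv \<and>
     (\<forall>e\<in>E. \<forall>f\<in>E. \<forall>g\<in>E. crosses pos cv e f \<and> crosses pos cv e g \<longrightarrow> f = g)"

definition assoc_edges :: "'v set set \<Rightarrow> 'v set \<Rightarrow> 'v set \<Rightarrow> 'v set set" where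
  "assoc_edges E e f = {g \<in> E. g \<subseteq> e \<union> f} - {e, f}"

definition type_2A :: "'v set \<Rightarrow> 'v set set \<Rightarrow> ('v \<Rightarrow> complex) \<Rightarrow> ('v set \<Rightarrow> real \<Rightarrow> complex) \<Rightarrow> bool" where
  "type_2A V E pos cv \<longleftrightarrow> one_planar V E pos cv \<and>
     (\<forall>e\<in>E. \<forall>f\<in>E. crosses pos cv e f \<longrightarrow>
        card (assoc_edges E e f) \<ge> 2 \<and>
        (card (assoc_edges E e f) = 2 \<longrightarrow>
           (\<forall>g\<in>assoc_edges E e f. \<forall>h\<in>assoc_edges E e f. g \<noteq> h \<longrightarrow> g \<inter> h = {})))"

definition nice :: "'v set \<Rightarrow> 'v set set \<Rightarrow> ('v \<Rightarrow> complex) \<Rightarrow> ('v set \<Rightarrow> real \<Rightarrow> complex) \<Rightarrow> bool" where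
  "nice V E pos cv \<longleftrightarrow> one_planar V E pos cv \<and>
     (\<forall>e\<in>E. \<forall>f\<in>E. crosses pos cv e f \<longrightarrow>
        (\<forall>g\<in>assoc_edges E e f. \<forall>h\<in>E. \<not> crosses pos cv g h))"

definition edges_between :: "'v set set \<Rightarrow> 'v set \<Rightarrow> 'v set \<Rightarrow> 'v set set" where
  "edges_between E V1 V2 = {e \<in> E. \<exists>a b. e = {a, b} \<and> a \<in> V1 \<and> b \<in> V2}"

definition nbhd :: "'v set set \<Rightarrow> 'v set \<Rightarrow> 'v set \<Rightarrow> 'v set" where
  "nbhd E V1 V2 = {v \<in> V2. \<exists>u \<in> V1. {u, v} \<in> E}"

end

theory Submission
  imports Defs
begin

text \<open>
  Let \<open>uv\<close> with \<open>u \<in> X\<close>, \<open>v \<in> Y\<close> be removed because it crosses an edge \<open>ab\<close> inside \<open>X\<close>.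
  In a good drawing \<open>ab\<close> and \<open>uv\<close> are disjoint. If \<open>v\<close> were adjacent to neither \<open>a\<close> nor \<open>b\<close>,
  the only possible associated edges of the crossing would be \<open>ua\<close> and \<open>ub\<close>; type-2A demands
  at least two, hence exactly these two, but they share \<open>u\<close>. So some \<open>wv\<close> with \<open>w \<in> {a, b}\<close>
  is an associated edge, which niceness keeps uncrossed: it survives and still joins \<open>v\<close> to \<open>X\<close>.
\<close>

lemma simple_graph_edgeE:
  assumes "simple_graph V E" and "e \<in> E"
  obtains a b where "a \<noteq> b" and "e = {a, b}"
  using assms unfolding simple_graph_def by blast

lemma type_2A_good_drawing:
  assumes "type_2A V E pos cv"
  shows "good_drawing V E pos cv"
  using assms unfolding type_2A_def one_planar_def by blast

lemma good_drawing_crossing_edges_disjoint: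
  assumes "good_drawing V E pos cv" and "e \<in> E" and "f \<in> E" and "crosses pos cv e f"
  shows "e \<inter> f = {}"
  using assms unfolding good_drawing_def crosses_def by blast

lemma nice_assoc_edge_uncrossed:
  assumes "nice V E pos cv" and "e \<in> E" and "f \<in> E" and "crosses pos cv e f"
    and "g \<in> assoc_edges E e f" and "h \<in> E"
  shows "\<not> crosses pos cv g h"
  using assms unfolding nice_def by blast

lemma assoc_edges_subset_if_endpoint_isolated:
  assumes "simple_graph V E" and "{u, v} \<inter> {a, b} = {}"
    and "\<And>w. w \<in> {a, b} \<Longrightarrow> {w, v} \<notin> E"
  shows "assoc_edges E {u, v} {a, b} \<subseteq> {{u, a}, {u, b}}"
proof
  fix g assume "g \<in> assoc_edges E {u, v} {a, b}"
  then have "g \<in> E" and g_sub: "g \<subseteq> {u, v, a, b}" and "g \<noteq> {u, v}" "g \<noteq> {a, b}"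
    unfolding assoc_edges_def by auto
  obtain x y where "x \<noteq> y" and g_eq: "g = {x, y}"
    using simple_graph_edgeE[OF assms(1) \<open>g \<in> E\<close>] .
  have "v \<notin> g"
  proof
    assume "v \<in> g"
    then obtain z where "g = {z, v}"
      using g_eq by (auto simp: insert_commute)
    then have "z \<in> {a, b}"
      using g_sub \<open>g \<noteq> {u, v}\<close> \<open>x \<noteq> y\<close> g_eq by (auto simp: insert_commute doubleton_eq_iff)
    then show False
      using assms(3) \<open>g \<in> E\<close> \<open>g = {z, v}\<close> by blast
  qed
  then show "g \<in> {{u, a}, {u, b}}"
    using g_eq g_sub \<open>x \<noteq> y\<close> \<open>g \<noteq> {a, b}\<close> by (auto simp: insert_commute)
qed

lemma type_2A_crossing_endpoint_adjacent:
  assumes "simple_graph V E" and "type_2A V E pos cv"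
    and "{u, v} \<in> E" and "{a, b} \<in> E" and "crosses pos cv {u, v} {a, b}"
  shows "\<exists>w\<in>{a, b}. {w, v} \<in> E"
proof (rule ccontr)
  assume isolated: "\<not> (\<exists>w\<in>{a, b}. {w, v} \<in> E)"
  let ?A = "assoc_edges E {u, v} {a, b}"
  have disj: "{u, v} \<inter> {a, b} = {}"
    using good_drawing_crossing_edges_disjoint[OF type_2A_good_drawing] assms(2-5) by blast
  have two_assoc: "card ?A \<ge> 2"
    and disjoint_if_two: "card ?A = 2 \<Longrightarrow> \<forall>g\<in>?A. \<forall>h\<in>?A. g \<noteq> h \<longrightarrow> g \<inter> h = {}"
    using assms(2-5) unfolding type_2A_def by blast+
  have "?A \<subseteq> {{u, a}, {u, b}}"
    using assoc_edges_subset_if_endpoint_isolated[OF assms(1) disj] isolated by blast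
  moreover have "card {{u, a}, {u, b}} \<le> 2"
    by (simp add: card_insert_le_m1)
  ultimately have A_eq: "?A = {{u, a}, {u, b}}"
    using two_assoc by (intro card_seteq) auto
  have "a \<noteq> b"
    using simple_graph_edgeE[OF assms(1,4)] by (metis doubleton_eq_iff)
  then have "{u, a} \<noteq> {u, b}"
    using disj by (auto simp: doubleton_eq_iff)
  then have "card ?A = 2"
    unfolding A_eq by simp
  then have "{u, a} \<inter> {u, b} = {}"
    using disjoint_if_two \<open>{u, a} \<noteq> {u, b}\<close> unfolding A_eq by (metis insertCI)
  then show False
    by blast
qed

lemma nice_type_2A_crossing_uncrossed_neighbour:
  assumes "simple_graph V E" and "type_2A V E pos cv" and "nice V E pos cv"
    and "{u, v} \<in> E" and "f \<in> E" and cross: "crosses pos cv {u, v} f"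
  shows "\<exists>w\<in>f. {w, v} \<in> E \<and> (\<forall>h\<in>E. \<not> crosses pos cv {w, v} h)"
proof -
  obtain a b where f_eq: "f = {a, b}"
    using simple_graph_edgeE[OF assms(1,5)] by blast
  then obtain w where "w \<in> f" and wv: "{w, v} \<in> E"
    using type_2A_crossing_endpoint_adjacent[OF assms(1,2,4)] assms(5) cross by blast
  have "{u, v} \<inter> f = {}"
    using good_drawing_crossing_edges_disjoint[OF type_2A_good_drawing] assms(2,4,5) cross by blast
  then have "{w, v} \<in> assoc_edges E {u, v} f"
    using \<open>w \<in> f\<close> wv unfolding assoc_edges_def by auto
  then show ?thesis
    using nice_assoc_edge_uncrossed[OF assms(3-5) cross] \<open>w \<in> f\<close> wv by blast
qed

theorem lemma9:
  fixes V :: "'v set" and E :: "'v set set"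
    and pos :: "'v \<Rightarrow> complex" and cv :: "'v set \<Rightarrow> real \<Rightarrow> complex"
    and X Y :: "'v set"
  assumes "simple_graph V E"
    and "type_2A V E pos cv"
    and "X \<subseteq> V" and "Y \<subseteq> V" and "X \<noteq> Y"
    and "nice V E pos cv"
  shows "nbhd (E - {e \<in> edges_between E X Y. \<exists>f\<in>E. f \<subseteq> X \<and> crosses pos cv e f}) X Y
         = nbhd E X Y"
proof
  let ?R = "{e \<in> edges_between E X Y. \<exists>f\<in>E. f \<subseteq> X \<and> crosses pos cv e f}"
  show "nbhd (E - ?R) X Y \<subseteq> nbhd E X Y"
    unfolding nbhd_def by blast
  show "nbhd E X Y \<subseteq> nbhd (E - ?R) X Y"
  proof
    fix v assume "v \<in> nbhd E X Y"
    then obtain u where "v \<in> Y" "u \<in> X" "{u, v} \<in> E"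
      unfolding nbhd_def by blast
    show "v \<in> nbhd (E - ?R) X Y"
    proof (cases "{u, v} \<in> ?R")
      case False
      then show ?thesis using \<open>v \<in> Y\<close> \<open>u \<in> X\<close> \<open>{u, v} \<in> E\<close> unfolding nbhd_def by blast
    next
      case True
      then obtain f where "f \<in> E" "f \<subseteq> X" and "crosses pos cv {u, v} f" by blast
      then obtain w where "w \<in> f" "{w, v} \<in> E" "\<forall>h\<in>E. \<not> crosses pos cv {w, v} h"
        using nice_type_2A_crossing_uncrossed_neighbour[OF assms(1,2,6) \<open>{u, v} \<in> E\<close>] by blast
      then have "{w, v} \<notin> ?R"
        using \<open>f \<in> E\<close> by blast
      then show ?thesis
        using \<open>w \<in> f\<close> \<open>f \<subseteq> X\<close> \<open>{w, v} \<in> E\<close> \<open>v \<in> Y\<close> unfolding nbhd_def by blast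
    qed
  qed
qed

end
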